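(* Let $A$ be a countable alphabet, $P$ a transition probability kernel on $A$, and $w$ a finite string of symbols of $A$. If \[ \inf_{c\in A^{k}}\ \sum_{a\in A}\ \inf_{\underline{z}\in A^{-\mathbb{N}}}P(a\,|\,\underline{z}\,c)\ \xrightarrow[k\to\infty]{}\ 1, \] then \[ \inf_{c\in A^{k}(w)}\ \sum_{a\in A}\ \inf_{\underline{z}\in A^{-\mathbb{N}}}P(a\,|\,\underline{z}\,c)\ \xrightarrow[k\to\infty]{}\ 1, \] and this latter convergence implies that \[ \alpha^{w}_{k}:=\inf_{i\geq 0}\ \inf_{b\in \mathcal{I}^{i}(\bar w)}\ \inf_{c\in A^{k}}\ \sum_{a\in A}\ \inf_{\underline{z}\in A^{-\mathbb{N}}} P\big(a\,\big|\,\underline{z}\,c\,w\,b\big)\ \xrightarrow[k\to\infty]{}\ 1 . \]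
   Context: $A^{-\mathbb{N}}$ is the set of infinite pasts $\underline{z}=\ldots z_{-2}z_{-1}$, $A^k$ the set of strings of length $k$. Strings are written in chronological order: $\underline{z}\,u\,v$ is the infinite past obtained by appending finite strings $u$ then $v$ after $\underline{z}$ (the last symbols of $v$ being the most recent). A transition probability kernel is a map $P:A\times A^{-\mathbb{N}}\to[0,1]$ with $\sum_a P(a|\underline{z})=1$ for every $\underline{z}$. For $k\ge |w|$, $A^k(w)$ is the set of strings of length $k$ that contain $w$ as a (contiguous) substring. For a string $x=x_{-m}\ldots x_{-1}$, $m^w(x)=\inf\{k\ge0: x_{-k-|w|}\ldots x_{-k-1}=w\}$ ($+\infty$ if none). $\mathcal{I}^{i}(\bar w)$ is the set of strings $b\in A^i$ equal to $a_{-i}\ldots a_{-1}$ for some infinite past $\underline{a}$ with $m^w(\underline{a})=i$, i.e. strings $b$ of length $i$ such that in $w\,b$ the string $w$ occurs only as the prefix ($\mathcal{I}^0(\bar w)=\{\emptyset\}$). *)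

theory Defs
  imports "HOL-Analysis.Analysis"
begin

text \<open>An infinite past z = ... z_{-2} z_{-1} is a function nat => 'a with
  z 0 = z_{-1} (most recent symbol), z 1 = z_{-2}, etc.
  Finite strings are lists in chronological order (last element = most recent).\<close>

definition append_past :: "(nat \<Rightarrow> 'a) \<Rightarrow> 'a list \<Rightarrow> (nat \<Rightarrow> 'a)" where
  "append_past z u = (\<lambda>i. if i < length u then rev u ! i else z (i - length u))"

definition transition_kernel :: "('a \<Rightarrow> (nat \<Rightarrow> 'a) \<Rightarrow> real) \<Rightarrow> bool" where
  "transition_kernel P \<longleftrightarrow>
     (\<forall>a z. 0 \<le> P a z \<and> P a z \<le> 1) \<and> (\<forall>z. ((\<lambda>a. P a z) has_sum 1) UNIV)"

definition strings_containing :: "nat \<Rightarrow> 'a list \<Rightarrow> 'a list set" where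
  "strings_containing k w = {c. length c = k \<and> (\<exists>u v. c = u @ w @ v)}"

text \<open>I^i(w bar): strings b of length i such that in w b the string w occurs only as prefix.\<close>
definition I_set :: "nat \<Rightarrow> 'a list \<Rightarrow> 'a list set" where
  "I_set i w = {b. length b = i \<and>
     (\<forall>j. j + length w \<le> length (w @ b) \<and> take (length w) (drop j (w @ b)) = w \<longrightarrow> j = 0)}"

definition lower_mass :: "('a \<Rightarrow> (nat \<Rightarrow> 'a) \<Rightarrow> real) \<Rightarrow> 'a list \<Rightarrow> real" where
  "lower_mass P c = (\<Sum>\<^sub>\<infinity>a. Inf (range (\<lambda>z. P a (append_past z c))))"

definition alpha_w :: "('a \<Rightarrow> (nat \<Rightarrow> 'a) \<Rightarrow> real) \<Rightarrow> 'a list \<Rightarrow> nat \<Rightarrow> real" where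
  "alpha_w P w k = Inf {lower_mass P (c @ w @ b) | i b c. b \<in> I_set i w \<and> length c = k}"

end

theory Submission
  imports Defs
begin

text \<open>Since A^k(w) is a nonempty subset of A^k for k \<ge> |w|,
  its infimum is squeezed between the infimum over A^k and 1. Every string c w b with
  c \<in> A^k lies in A^n(w) for some n \<ge> k, so alpha_w k is bounded below by every lower
  bound of the tail (inf over A^n(w))_{n \<ge> k}, and above by 1; a sequence with such a
  tail minorant converging to 1 itself converges to 1.\<close>

lemma tendsto_of_tail_minorant:
  fixes X g :: "nat \<Rightarrow> real"
  assumes "X \<longlonglongrightarrow> l"
    and tail: "\<And>k t. (\<And>n. k \<le> n \<Longrightarrow> t \<le> X n) \<Longrightarrow> t \<le> g k"
    and "\<And>k. g k \<le> l"
  shows "g \<longlonglongrightarrow> l"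
proof (rule order_tendstoI)
  fix a assume "a < l"
  then have "eventually (\<lambda>n. (a + l) / 2 < X n) sequentially"
    using assms(1) by (intro order_tendstoD(1)) auto
  then obtain N where "\<And>n. N \<le> n \<Longrightarrow> (a + l) / 2 < X n"
    unfolding eventually_sequentially by blast
  then have "(a + l) / 2 \<le> g k" if "N \<le> k" for k
    using that by (intro tail) (auto intro: less_imp_le)
  moreover have "a < (a + l) / 2"
    using \<open>a < l\<close> by simp
  ultimately have "\<And>k. N \<le> k \<Longrightarrow> a < g k"
    by (meson less_le_trans)
  then show "eventually (\<lambda>k. a < g k) sequentially"
    unfolding eventually_sequentially by blast
next
  fix a assume "l < a"
  then show "eventually (\<lambda>k. g k < a) sequentially"
    using assms(3) le_less_trans by (intro always_eventually) blast
qed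

lemma lower_mass_bounds:
  fixes P :: "'a \<Rightarrow> (nat \<Rightarrow> 'a) \<Rightarrow> real"
  assumes "transition_kernel P"
  shows "0 \<le> lower_mass P c" and "lower_mass P c \<le> 1"
proof -
  define f where "f a = Inf (range (\<lambda>z. P a (append_past z c)))" for a
  have P01: "0 \<le> P a z" "P a z \<le> 1" and sum1: "((\<lambda>a. P a z) has_sum 1) UNIV" for a z
    using assms unfolding transition_kernel_def by auto
  have f_nonneg: "0 \<le> f a" for a
    unfolding f_def using P01 by (auto intro!: cInf_greatest)
  have f_le: "f a \<le> P a (append_past z c)" for a z
    unfolding f_def using P01 by (auto intro!: cInf_lower bdd_belowI[of _ 0])
  define z :: "nat \<Rightarrow> 'a" where "z = undefined"
  have summable: "(\<lambda>a. P a (append_past z c)) summable_on UNIV"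
    using sum1 by (rule has_sum_imp_summable)
  have "f summable_on UNIV"
    by (rule summable_on_comparison_test[OF summable]) (auto simp: f_le f_nonneg)
  then have "infsum f UNIV \<le> infsum (\<lambda>a. P a (append_past z c)) UNIV"
    using summable f_le by (rule infsum_mono)
  also have "\<dots> = 1"
    using sum1 by (rule infsumI)
  finally show "lower_mass P c \<le> 1"
    unfolding lower_mass_def f_def[symmetric] .
  show "0 \<le> lower_mass P c"
    unfolding lower_mass_def f_def[symmetric] using f_nonneg by (intro infsum_nonneg) auto
qed

lemma bdd_below_lower_mass:
  "transition_kernel P \<Longrightarrow> bdd_below (lower_mass P ` S)"
  using lower_mass_bounds(1) by (rule bdd_belowI2)

lemma Inf_lower_mass_le_one:
  assumes "transition_kernel P" and "S \<noteq> {}"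
  shows "Inf (lower_mass P ` S) \<le> 1"
proof -
  obtain c where "c \<in> S"
    using assms(2) by blast
  then have "Inf (lower_mass P ` S) \<le> lower_mass P c"
    by (intro cInf_lower bdd_below_lower_mass[OF assms(1)]) auto
  then show ?thesis
    using lower_mass_bounds(2)[OF assms(1)] by (rule order_trans)
qed

lemma strings_containing_nonempty:
  assumes "length w \<le> k"
  shows "strings_containing k w \<noteq> {}"
proof -
  have "replicate (k - length w) undefined @ w @ [] \<in> strings_containing k w"
    unfolding strings_containing_def using assms by force
  then show ?thesis by blast
qed

lemma Inf_lower_mass_le_Inf_strings_containing:
  assumes "transition_kernel P" and "length w \<le> k"
  shows "Inf (lower_mass P ` {c. length c = k}) \<le> Inf (lower_mass P ` strings_containing k w)"
  using strings_containing_nonempty[OF assms(2)] bdd_below_lower_mass[OF assms(1)]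
  by (intro cInf_superset_mono) (auto simp: strings_containing_def)

lemma replicate_context_in_alpha_w_set:
  "lower_mass P (replicate k a @ w) \<in>
     {lower_mass P (c @ w @ b) | i b c. b \<in> I_set i w \<and> length c = k}"
proof -
  have "[] \<in> I_set 0 w"
    unfolding I_set_def by auto
  then show ?thesis
    by (intro CollectI exI[of _ 0] exI[of _ "[]"] exI[of _ "replicate k a"]) simp
qed

lemma alpha_w_le_one:
  assumes "transition_kernel P"
  shows "alpha_w P w k \<le> 1"
  unfolding alpha_w_def
proof (rule cInf_lower2[OF replicate_context_in_alpha_w_set])
  show "bdd_below {lower_mass P (c @ w @ b) | i b c. b \<in> I_set i w \<and> length c = k}"
    using lower_mass_bounds(1)[OF assms] by (auto intro: bdd_belowI[of _ 0])
  show "lower_mass P (replicate k undefined @ w) \<le> 1"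
    using assms by (rule lower_mass_bounds(2))
qed

lemma alpha_w_ge_tail_minorant:
  assumes "transition_kernel P"
    and minorant: "\<And>n. k \<le> n \<Longrightarrow> t \<le> Inf (lower_mass P ` strings_containing n w)"
  shows "t \<le> alpha_w P w k"
  unfolding alpha_w_def
proof (rule cInf_greatest)
  show "{lower_mass P (c @ w @ b) | i b c. b \<in> I_set i w \<and> length c = k} \<noteq> {}"
    using replicate_context_in_alpha_w_set[of P k undefined w] by (metis empty_iff)
next
  fix x assume "x \<in> {lower_mass P (c @ w @ b) | i b c. b \<in> I_set i w \<and> length c = k}"
  then obtain b c where x: "x = lower_mass P (c @ w @ b)" and "length c = k"
    by blast
  define n where "n = length (c @ w @ b)"
  have "c @ w @ b \<in> strings_containing n w"
    unfolding strings_containing_def n_def by blast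
  then have "Inf (lower_mass P ` strings_containing n w) \<le> x"
    unfolding x by (intro cInf_lower imageI bdd_below_lower_mass[OF assms(1)])
  moreover have "t \<le> Inf (lower_mass P ` strings_containing n w)"
    using \<open>length c = k\<close> unfolding n_def by (intro minorant) simp
  ultimately show "t \<le> x"
    by simp
qed

theorem proposition1:
  fixes P :: "'a::countable \<Rightarrow> (nat \<Rightarrow> 'a) \<Rightarrow> real" and w :: "'a list"
  assumes "transition_kernel P"
  shows "((\<lambda>k. Inf (lower_mass P ` {c. length c = k})) \<longlonglongrightarrow> 1
            \<longrightarrow> (\<lambda>k. Inf (lower_mass P ` strings_containing k w)) \<longlonglongrightarrow> 1)
       \<and> ((\<lambda>k. Inf (lower_mass P ` strings_containing k w)) \<longlonglongrightarrow> 1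
            \<longrightarrow> (\<lambda>k. alpha_w P w k) \<longlonglongrightarrow> 1)"
proof (intro conjI impI)
  assume "(\<lambda>k. Inf (lower_mass P ` {c. length c = k})) \<longlonglongrightarrow> 1"
  then show "(\<lambda>k. Inf (lower_mass P ` strings_containing k w)) \<longlonglongrightarrow> 1"
  proof (rule tendsto_sandwich[rotated 2, OF _ tendsto_const])
    show "eventually (\<lambda>k. Inf (lower_mass P ` {c. length c = k})
        \<le> Inf (lower_mass P ` strings_containing k w)) sequentially"
      using eventually_ge_at_top[of "length w"]
      by eventually_elim (rule Inf_lower_mass_le_Inf_strings_containing[OF assms])
    show "eventually (\<lambda>k. Inf (lower_mass P ` strings_containing k w) \<le> 1) sequentially"
      using eventually_ge_at_top[of "length w"]
      by eventually_elim
        (intro Inf_lower_mass_le_one[OF assms] strings_containing_nonempty)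
  qed
next
  assume "(\<lambda>k. Inf (lower_mass P ` strings_containing k w)) \<longlonglongrightarrow> 1"
  then show "(\<lambda>k. alpha_w P w k) \<longlonglongrightarrow> 1"
    using alpha_w_ge_tail_minorant[OF assms] alpha_w_le_one[OF assms]
    by (rule tendsto_of_tail_minorant)
qed

end
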